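(* Let $n\ge2$, $N\ge n$ and let $(\mathcal T_0,\mathfrak c)$ be an $(N{+}1)$-colored initial triangulation in $\mathbb R^n$. Then successive bisections of simplices in $\mathcal T_0$ according to the generation-based bisection rule produce the same simplices as successive applications of Maubach's bisection to the simplices of $\mathcal T_0$ tagged by the Maubach initialization.
   Context: An $(N{+}1)$-colored triangulation is a conforming triangulation $\mathcal T_0$ of a polyhedral domain in $\mathbb R^n$ (finite set of $n$-simplices with disjoint interiors, any two meeting in the empty set or a common subsimplex) with a map $\mathfrak c$ from its vertices to $\{0,\dots,N\}$, $N\ge n$, such that vertices of each simplex have distinct colors. Generation-based rule: each vertex $v$ has an integer generation $g(v)$, level $\ell(v)$ and type $t(v)\in\{1,\dots,N\}$ with $g(v)=N(\ell(v)-1)+t(v)$; initial vertices have $g(v)=-\mathfrak c(v)$. For an arising $n$-simplex $T=[v_0,\dots,v_n]$ sorted so that $g(v_0)>\dots>g(v_n)$: if $\ell(v_n)\ne\ell(v_{n-1})$, the bisection edge is $[v_{n-1},v_n]$ and the midpoint gets generation $g(v_{n-1})+N$; otherwise with $j=\min\{k:\ell(v_k)=\ell(v_n)\}$ the bisection edge is $[v_j,v_n]$ and the midpoint gets generation $g(v_n)+2N+1-t(v_j)$. The children replace one endpoint of the bisection edge by its midpoint. Maubach's bisection: a tagged simplex $[v_0,\dots,v_n]_\gamma$, $\gamma\in\{1,\dots,n\}$, is bisected at $v'=(v_0+v_\gamma)/2$ into $[v_0,\dots,v_{\gamma-1},v',v_{\gamma+1},\dots,v_n]_{\gamma'}$ and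 $[v_1,\dots,v_\gamma,v',v_{\gamma+1},\dots,v_n]_{\gamma'}$, with $\gamma'=\gamma-1$ if $\gamma\ge2$ and $\gamma'=n$ if $\gamma=1$. Maubach initialization: order the vertices of $T\in\mathcal T_0$ as $v_0,\dots,v_n$ with $\mathfrak c(v_0)<\dots<\mathfrak c(v_n)$ and tag $T=[v_n,v_0,\dots,v_{n-1}]_n$ if $\mathfrak c(v_n)=N$, and $T=[v_0,\dots,v_n]_n$ otherwise. *)

theory Defs
  imports "HOL-Analysis.Analysis"
begin

type_synonym 'n pt = "real ^ 'n"

definition is_simplex :: "'n::finite pt set \<Rightarrow> bool" where
  "is_simplex V \<longleftrightarrow> finite V \<and> card V = CARD('n) + 1 \<and> \<not> affine_dependent V"

definition conforming_triangulation :: "'n::finite pt set set \<Rightarrow> bool" where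
  "conforming_triangulation T0 \<longleftrightarrow>
     finite T0 \<and> (\<forall>V\<in>T0. is_simplex V) \<and>
     (\<forall>V\<in>T0. \<forall>W\<in>T0. V \<noteq> W \<longrightarrow>
        interior (convex hull V) \<inter> interior (convex hull W) = {} \<and>
        convex hull V \<inter> convex hull W = convex hull (V \<inter> W))"

definition colored_triangulation ::
  "nat \<Rightarrow> 'n::finite pt set set \<Rightarrow> ('n pt \<Rightarrow> nat) \<Rightarrow> bool" where
  "colored_triangulation N T0 c \<longleftrightarrow>
     conforming_triangulation T0 \<and> CARD('n) \<le> N \<and>
     (\<forall>V\<in>T0. (\<forall>v\<in>V. c v \<le> N) \<and> inj_on c V)"

text \<open>A simplex for the generation-based rule is a list of its vertices, each
  paired with its generation. g = N(l-1)+t with t in {1..N}.\<close>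

definition lvl :: "nat \<Rightarrow> int \<Rightarrow> int" where
  "lvl N g = (g - 1) div int N + 1"

definition vtype :: "nat \<Rightarrow> int \<Rightarrow> int" where
  "vtype N g = (g - 1) mod int N + 1"

definition gsort :: "('n pt \<times> int) list \<Rightarrow> ('n pt \<times> int) list" where
  "gsort S = rev (sort_key snd S)"

definition gen_children ::
  "nat \<Rightarrow> ('n::finite pt \<times> int) list \<Rightarrow> ('n pt \<times> int) list set" where
  "gen_children N S =
     (let ws = gsort S; m = length ws - 1;
          g = (\<lambda>k. snd (ws ! k)); x = (\<lambda>k. fst (ws ! k))
      in if lvl N (g m) \<noteq> lvl N (g (m - 1)) then
           (let v' = (midpoint (x (m - 1)) (x m), g (m - 1) + int N)
            in {ws[m - 1 := v'], ws[m := v']})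
         else
           (let j = (LEAST k. lvl N (g k) = lvl N (g m));
                v' = (midpoint (x j) (x m), g m + 2 * int N + 1 - vtype N (g j))
            in {ws[j := v'], ws[m := v']}))"

inductive_set gen_desc ::
  "nat \<Rightarrow> ('n::finite pt \<times> int) list \<Rightarrow> ('n pt \<times> int) list set"
  for N S where
  gen_root: "S \<in> gen_desc N S"
| gen_step: "S' \<in> gen_desc N S \<Longrightarrow> S'' \<in> gen_children N S' \<Longrightarrow> S'' \<in> gen_desc N S"

text \<open>Tagged simplex [v_0,...,v_n]_gamma; n = CARD('n).\<close>
definition maub_children ::
  "('n::finite pt list \<times> nat) \<Rightarrow> ('n pt list \<times> nat) set" where
  "maub_children T =
     (let vs = fst T; \<gamma> = snd T; v' = midpoint (vs ! 0) (vs ! \<gamma>);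
          \<gamma>' = (if 2 \<le> \<gamma> then \<gamma> - 1 else CARD('n))
      in {(vs[\<gamma> := v'], \<gamma>'),
          (take \<gamma> (drop 1 vs) @ [v'] @ drop (\<gamma> + 1) vs, \<gamma>')})"

inductive_set maub_desc ::
  "('n::finite pt list \<times> nat) \<Rightarrow> ('n pt list \<times> nat) set"
  for T where
  maub_root: "T \<in> maub_desc T"
| maub_step: "T' \<in> maub_desc T \<Longrightarrow> T'' \<in> maub_children T' \<Longrightarrow> T'' \<in> maub_desc T"

text \<open>Maubach initialization: vs lists the vertices with increasing colours.\<close>
definition maub_init :: "nat \<Rightarrow> ('n::finite pt \<Rightarrow> nat) \<Rightarrow> 'n pt list \<Rightarrow> 'n pt list \<times> nat" where
  "maub_init N c vs =
     (if c (last vs) = N then (last vs # butlast vs, CARD('n)) else (vs, CARD('n)))"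

definition gen_init :: "('n::finite pt \<Rightarrow> nat) \<Rightarrow> 'n pt list \<Rightarrow> ('n pt \<times> int) list" where
  "gen_init c vs = map (\<lambda>v. (v, - int (c v))) vs"

end

theory Submission
  imports Defs
begin

(* Write a Maubach-tagged simplex as [v0, v1..v\<gamma>, v(\<gamma>+1)..vn]_\<gamma> and attach to every vertex
   the generation the generation-based rule gives it.  Both refinements preserve the
   invariant: v1..v\<gamma> have decreasing generations in one level l; v(\<gamma>+1)..vn have decreasing
   generations in level l + 1, all smaller than the generation the midpoint of [v0, v\<gamma>] is
   going to receive; and v0 lies either in a lower level or in level l with a larger
   generation than v1.  Sorting by generation then lists the vertices as
   v(\<gamma>+1)..vn, v1..v\<gamma>, v0 or as v(\<gamma>+1)..vn, v0, v1..v\<gamma>; in both cases the rule bisects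
   [v0, v\<gamma>], Maubach's refinement edge, and the two children satisfy the invariant again.
   The initial simplices satisfy it, so the two refinement trees are bisimilar. *)

lemma lvl_bounds:
  assumes "N > 0"
  shows "int N * (lvl N g - 1) < g" "g \<le> int N * lvl N g"
proof -
  define q r where "q = (g - 1) div int N" and "r = (g - 1) mod int N"
  have "int N * q + r = g - 1" "0 \<le> r" "r < int N"
    unfolding q_def r_def using assms by simp_all
  moreover have "int N * lvl N g = int N * q + int N"
    unfolding lvl_def q_def by (simp add: distrib_left)
  ultimately show "int N * (lvl N g - 1) < g" "g \<le> int N * lvl N g"
    by (simp_all add: right_diff_distrib)
qed

lemma lvl_eqI:
  assumes "N > 0" "int N * (l - 1) < g" "g \<le> int N * l"
  shows "lvl N g = l"
proof -
  have "int N * (lvl N g - 1) < int N * l" "int N * (l - 1) < int N * lvl N g"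
    using lvl_bounds[OF assms(1), of g] assms(2,3) by linarith+
  then show ?thesis
    using assms(1) by (simp only: mult_less_cancel_left) simp
qed

lemma less_if_lvl_less:
  assumes "N > 0" "lvl N a < lvl N b"
  shows "a < b"
proof (rule ccontr)
  assume "\<not> a < b"
  then have "(b - 1) div int N \<le> (a - 1) div int N"
    by (intro zdiv_mono1) (use assms(1) in auto)
  then show False
    using assms(2) unfolding lvl_def by simp
qed

lemma lvl_add_N: "N > 0 \<Longrightarrow> lvl N (g + int N) = lvl N g + 1"
  unfolding lvl_def by (simp add: diff_add_eq[symmetric] div_add_self2)

lemma lvl_minus_int: "N > 0 \<Longrightarrow> k < N \<Longrightarrow> lvl N (- int k) = 0"
  by (rule lvl_eqI) auto

lemma lvl_minus_N: "N > 0 \<Longrightarrow> lvl N (- int N) = -1"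
  by (rule lvl_eqI) auto

lemma vtype_eq: "vtype N g = g - int N * (lvl N g - 1)"
  unfolding vtype_def lvl_def by (simp add: minus_div_mult_eq_mod[symmetric] algebra_simps)

lemma vtype_le: "N > 0 \<Longrightarrow> vtype N g \<le> int N"
  unfolding vtype_def using pos_mod_bound[of "int N" "g - 1"] by linarith

lemma vtype_less_vtype: "lvl N a = lvl N b \<Longrightarrow> a < b \<Longrightarrow> vtype N a < vtype N b"
  unfolding vtype_eq by simp

lemma sorted_wrt_greater_le_hd:
  "sorted_wrt (>) xs \<Longrightarrow> x \<in> set xs \<Longrightarrow> x \<le> hd (xs :: 'a::linorder list)"
  by (cases xs) auto

lemma gsort_eq:
  assumes "mset S = mset ws" "sorted_wrt (>) (map snd ws)"
  shows "gsort S = ws"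
proof -
  have "sorted_wrt (<) (map snd (rev ws))"
    using assms(2) by (simp add: rev_map[symmetric] sorted_wrt_rev)
  then have "sorted (map snd (rev ws))" "inj_on snd (set ws)"
    by (simp_all add: strict_sorted_iff distinct_map)
  moreover have "set S = set ws"
    using assms(1) by (rule mset_eq_setD)
  ultimately have "sort_key snd S = rev ws"
    by (intro sort_key_inj_key_eq) (use assms(1) in simp_all)
  then show ?thesis
    unfolding gsort_def by simp
qed

lemma gen_children_level_jump:
  assumes "gsort S = W @ [a, b]" "lvl N (snd b) \<noteq> lvl N (snd a)"
  defines "v \<equiv> (midpoint (fst a) (fst b), snd a + int N)"
  shows "gen_children N S = {W @ [v, b], W @ [a, v]}"
  using assms unfolding gen_children_def Let_def
  by (simp add: nth_append list_update_append)

lemma gen_children_same_level: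
  assumes "gsort S = W @ b # R" "R \<noteq> []"
    "\<forall>x\<in>set (b # R). lvl N (snd x) = l" "\<forall>x\<in>set W. lvl N (snd x) \<noteq> l"
  defines "v \<equiv> (midpoint (fst b) (fst (last R)), snd (last R) + 2 * int N + 1 - vtype N (snd b))"
  shows "gen_children N S = {W @ v # R, W @ b # butlast R @ [v]}"
proof -
  define ws where "ws = W @ b # R"
  define m where "m = length ws - 1"
  have last: "ws ! m = last R"
    unfolding ws_def m_def using assms(2) by (simp add: nth_append last_conv_nth)
  have "ws ! (m - 1) = (b # R) ! (m - 1 - length W)" "m - 1 - length W < length (b # R)"
    unfolding ws_def m_def using assms(2) by (cases R) (simp_all add: nth_append)
  then have "ws ! (m - 1) \<in> set (b # R)"
    by (metis nth_mem)
  then have lvl_m: "lvl N (snd (ws ! m)) = l" and lvl_m1: "lvl N (snd (ws ! (m - 1))) = l"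
    using last assms(2,3) by auto
  have least: "(LEAST k. lvl N (snd (ws ! k)) = l) = length W"
  proof (rule Least_equality)
    show "lvl N (snd (ws ! length W)) = l"
      unfolding ws_def using assms(3) by simp
    show "length W \<le> k" if "lvl N (snd (ws ! k)) = l" for k
      using that assms(4) unfolding ws_def by (cases "k < length W") (auto simp: nth_append)
  qed
  have at_b: "ws ! length W = b" and upd_b: "ws[length W := v] = W @ v # R"
    unfolding ws_def by simp_all
  have upd_m: "ws[m := v] = W @ b # butlast R @ [v]"
    unfolding ws_def m_def using assms(2)
    by (cases R rule: rev_cases) (simp_all add: list_update_append)
  have sorted: "gsort S = ws"
    unfolding ws_def by (rule assms(1))
  show ?thesis
    unfolding gen_children_def Let_def sorted m_def[symmetric] lvl_m lvl_m1
    unfolding least at_b last v_def[symmetric] upd_b upd_m by simp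
qed

lemma maub_children_blocks:
  fixes v0 :: "'n::finite pt"
  assumes "L \<noteq> []"
  defines "v \<equiv> midpoint v0 (last L)"
    and "\<gamma>' \<equiv> (if 2 \<le> length L then length L - 1 else CARD('n))"
  shows "maub_children (v0 # L @ U, length L) = {(v0 # butlast L @ v # U, \<gamma>'), (L @ v # U, \<gamma>')}"
  using assms(1) unfolding maub_children_def Let_def v_def \<gamma>'_def
  by (cases L rule: rev_cases) (simp_all add: nth_append list_update_append)

text \<open>The generation the rule gives to the midpoint of the edge from a vertex of generation
  \<open>g0\<close> to one of generation \<open>g\<close>, for the two orders of the sorted vertex list described in
  the header.\<close>

definition bisect_gen :: "nat \<Rightarrow> int \<Rightarrow> int \<Rightarrow> int" where
  "bisect_gen N g0 g =
     (if lvl N g0 < lvl N g then g + int N else g + 2 * int N + 1 - vtype N g0)"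

lemma lvl_bisect_gen:
  assumes "N > 0" "lvl N g0 < lvl N g \<or> lvl N g0 = lvl N g \<and> g < g0"
  shows "lvl N (bisect_gen N g0 g) = lvl N g + 1"
  using assms(2)
proof
  assume "lvl N g0 < lvl N g"
  then show ?thesis
    unfolding bisect_gen_def using lvl_add_N[OF assms(1)] by simp
next
  assume same: "lvl N g0 = lvl N g \<and> g < g0"
  show ?thesis
  proof (rule lvl_eqI[OF assms(1)])
    have "int N * (lvl N g - 1) < g" "g0 \<le> int N * lvl N g"
      using lvl_bounds[OF assms(1), of g] lvl_bounds[OF assms(1), of g0] same by simp_all
    then show "int N * (lvl N g + 1 - 1) < bisect_gen N g0 g"
      "bisect_gen N g0 g \<le> int N * (lvl N g + 1)"
      using same unfolding bisect_gen_def vtype_eq by (simp_all add: algebra_simps)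
  qed
qed

text \<open>The invariant of the header for the generations of \<open>[v0, L, U]_\<gamma>\<close> with
  \<open>\<gamma> = length L\<close>: \<open>g0\<close> belongs to \<open>v0\<close>, \<open>L\<close> to \<open>v1..v\<gamma>\<close> and \<open>U\<close> to \<open>v(\<gamma>+1)..vn\<close>.\<close>

definition tagged_gens :: "nat \<Rightarrow> int \<Rightarrow> int list \<Rightarrow> int list \<Rightarrow> bool" where
  "tagged_gens N g0 L U \<longleftrightarrow> (\<exists>l. L \<noteq> [] \<and> sorted_wrt (>) L \<and> sorted_wrt (>) U \<and>
     (\<forall>g\<in>set L. lvl N g = l) \<and>
     (\<forall>g\<in>set U. lvl N g = l + 1 \<and> g < bisect_gen N g0 (last L)) \<and>
     (lvl N g0 < l \<or> lvl N g0 = l \<and> hd L < g0))"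

lemma tagged_gens_levels:
  assumes "tagged_gens N g0 L U" "lvl N (last L) = l"
  shows "\<forall>g\<in>set L. lvl N g = l" "\<forall>g\<in>set U. lvl N g = l + 1" "lvl N g0 \<le> l"
  using assms unfolding tagged_gens_def by auto

lemma tagged_gens_lvl_bisect_gen:
  assumes "N > 0" "tagged_gens N g0 L U"
  shows "lvl N (bisect_gen N g0 (last L)) = lvl N (last L) + 1"
proof (rule lvl_bisect_gen[OF assms(1)])
  show "lvl N g0 < lvl N (last L) \<or> lvl N g0 = lvl N (last L) \<and> last L < g0"
    using assms(2) sorted_wrt_greater_le_hd[of L "last L"] unfolding tagged_gens_def by auto
qed

lemma tagged_gens_sorted_lower:
  assumes "N > 0" "tagged_gens N g0 L U" "lvl N g0 < lvl N (last L)"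
  shows "sorted_wrt (>) (U @ L @ [g0])"
proof -
  obtain l where "L \<noteq> []" "sorted_wrt (>) L" "sorted_wrt (>) U"
    and L: "\<forall>g\<in>set L. lvl N g = l" and U: "\<forall>g\<in>set U. lvl N g = l + 1"
    using assms(2) unfolding tagged_gens_def by blast
  moreover have g0: "lvl N g0 < l"
    using assms(3) L \<open>L \<noteq> []\<close> by simp
  moreover have "g0 < g" if "g \<in> set L" for g
    using less_if_lvl_less[OF assms(1), of g0 g] L g0 that by simp
  moreover have "g < u" if "g \<in> set (L @ [g0])" "u \<in> set U" for g u
    using less_if_lvl_less[OF assms(1), of g u] L U g0 that by auto
  ultimately show ?thesis
    by (simp add: sorted_wrt_append)
qed

lemma tagged_gens_sorted_same:
  assumes "N > 0" "tagged_gens N g0 L U" "lvl N g0 = lvl N (last L)"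
  shows "sorted_wrt (>) (U @ g0 # L)"
proof -
  obtain l where "L \<noteq> []" "sorted_wrt (>) L" "sorted_wrt (>) U"
    and L: "\<forall>g\<in>set L. lvl N g = l" and U: "\<forall>g\<in>set U. lvl N g = l + 1"
    and "lvl N g0 < l \<or> lvl N g0 = l \<and> hd L < g0"
    using assms(2) unfolding tagged_gens_def by blast
  moreover have g0: "lvl N g0 = l" "hd L < g0"
    using calculation assms(3) by auto
  moreover have "g < g0" if "g \<in> set L" for g
    using sorted_wrt_greater_le_hd[OF \<open>sorted_wrt (>) L\<close> that] g0 by simp
  moreover have "g < u" if "g \<in> set (g0 # L)" "u \<in> set U" for g u
    using less_if_lvl_less[OF assms(1), of g u] L U g0 that by auto
  ultimately show ?thesis
    by (simp add: sorted_wrt_append)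
qed

lemma tagged_gens_keep_head:
  assumes "N > 0" "tagged_gens N g0 L U" "butlast L \<noteq> []"
  shows "tagged_gens N g0 (butlast L) (bisect_gen N g0 (last L) # U)"
proof -
  obtain L0 x where L: "L = L0 @ [x]" and "L0 \<noteq> []"
    using assms(3) by (cases L rule: rev_cases) auto
  obtain l where "sorted_wrt (>) L" "sorted_wrt (>) U"
    and lvlL: "\<forall>g\<in>set L. lvl N g = l"
    and U: "\<forall>g\<in>set U. lvl N g = l + 1 \<and> g < bisect_gen N g0 x"
    and head: "lvl N g0 < l \<or> lvl N g0 = l \<and> hd L < g0"
    using assms(2) unfolding tagged_gens_def L by auto
  have L0: "sorted_wrt (>) L0" "\<forall>g\<in>set L0. x < g \<and> lvl N g = l" "lvl N x = l"
    using \<open>sorted_wrt (>) L\<close> lvlL unfolding L by (auto simp: sorted_wrt_append)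
  have "bisect_gen N g0 x < bisect_gen N g0 (last L0)"
    using L0 \<open>L0 \<noteq> []\<close> unfolding bisect_gen_def by auto
  moreover have "lvl N (bisect_gen N g0 x) = l + 1"
    using tagged_gens_lvl_bisect_gen[OF assms(1,2)] L0(3) unfolding L by simp
  moreover have "hd L0 = hd L"
    using \<open>L0 \<noteq> []\<close> unfolding L by simp
  ultimately show ?thesis
    using \<open>L0 \<noteq> []\<close> \<open>sorted_wrt (>) U\<close> L0 U head unfolding tagged_gens_def L
    by (intro exI[of _ l]) auto
qed

lemma tagged_gens_drop_head:
  assumes "N > 0" "tagged_gens N g0 L U" "tl L \<noteq> []"
  shows "tagged_gens N (hd L) (tl L) (bisect_gen N g0 (last L) # U)"
proof -
  obtain x0 L1 where L: "L = x0 # L1" and "L1 \<noteq> []"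
    using assms(3) by (cases L) auto
  obtain l where "sorted_wrt (>) L" "sorted_wrt (>) U"
    and lvlL: "\<forall>g\<in>set L. lvl N g = l"
    and U: "\<forall>g\<in>set U. lvl N g = l + 1 \<and> g < bisect_gen N g0 (last L1)"
    and head: "lvl N g0 < l \<or> lvl N g0 = l \<and> x0 < g0"
    using assms(2) \<open>L1 \<noteq> []\<close> unfolding tagged_gens_def L by auto
  have L1: "sorted_wrt (>) L1" "\<forall>g\<in>set L1. g < x0 \<and> lvl N g = l" "lvl N x0 = l"
    using \<open>sorted_wrt (>) L\<close> lvlL unfolding L by auto
  have "bisect_gen N g0 (last L1) < bisect_gen N x0 (last L1)"
    using head
  proof
    assume "lvl N g0 < l"
    then show ?thesis
      using L1 \<open>L1 \<noteq> []\<close> vtype_le[OF assms(1), of x0] unfolding bisect_gen_def by auto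
  next
    assume "lvl N g0 = l \<and> x0 < g0"
    then show ?thesis
      using L1 \<open>L1 \<noteq> []\<close> vtype_less_vtype[of N x0 g0] unfolding bisect_gen_def by auto
  qed
  moreover have "lvl N (bisect_gen N g0 (last L1)) = l + 1"
    using tagged_gens_lvl_bisect_gen[OF assms(1,2)] L1 \<open>L1 \<noteq> []\<close> unfolding L by simp
  moreover have "hd L1 < x0"
    using L1(2) \<open>L1 \<noteq> []\<close> by simp
  ultimately show ?thesis
    using \<open>L1 \<noteq> []\<close> \<open>sorted_wrt (>) U\<close> L1 U unfolding tagged_gens_def L
    by (intro exI[of _ l]) auto
qed

lemma tagged_gens_level_up:
  assumes "N > 0" "tagged_gens N g0 [x] U" "lvl N h \<le> lvl N x"
  shows "tagged_gens N h (bisect_gen N g0 x # U) []"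
proof -
  have "sorted_wrt (>) U" "\<forall>g\<in>set U. lvl N g = lvl N x + 1 \<and> g < bisect_gen N g0 x"
    using assms(2) unfolding tagged_gens_def by auto
  moreover have "lvl N (bisect_gen N g0 x) = lvl N x + 1"
    using tagged_gens_lvl_bisect_gen[OF assms(1,2)] by simp
  ultimately show ?thesis
    using assms(3) unfolding tagged_gens_def by (intro exI[of _ "lvl N x + 1"]) auto
qed

lemma gen_children_tagged_lower:
  assumes "N > 0" "tagged_gens N (snd p0) (map snd L) (map snd U)" "mset S = mset (p0 # L @ U)"
    "lvl N (snd p0) < lvl N (snd (last L))"
  defines "v \<equiv> (midpoint (fst p0) (fst (last L)), bisect_gen N (snd p0) (snd (last L)))"
  shows "gen_children N S = {U @ butlast L @ [v, p0], U @ L @ [v]}"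
proof -
  have "L \<noteq> []"
    using assms(2) unfolding tagged_gens_def by simp
  then have L: "L = butlast L @ [last L]" and last: "last (map snd L) = snd (last L)"
    by (simp_all add: last_map)
  have "gsort S = U @ L @ [p0]"
    using tagged_gens_sorted_lower[OF assms(1,2)] assms(3,4) last by (intro gsort_eq) simp_all
  then have "gsort S = (U @ butlast L) @ [last L, p0]"
    by (subst (asm) L) simp
  moreover have "(midpoint (fst (last L)) (fst p0), snd (last L) + int N) = v"
    unfolding v_def bisect_gen_def using assms(4) by (simp add: midpoint_sym)
  ultimately show ?thesis
    using gen_children_level_jump[of S "U @ butlast L" "last L" p0 N] assms(4)
    by (subst (2) L) simp
qed

lemma gen_children_tagged_same:
  assumes "N > 0" "tagged_gens N (snd p0) (map snd L) (map snd U)" "mset S = mset (p0 # L @ U)"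
    "lvl N (snd p0) = lvl N (snd (last L))"
  defines "v \<equiv> (midpoint (fst p0) (fst (last L)), bisect_gen N (snd p0) (snd (last L)))"
  shows "gen_children N S = {U @ v # L, U @ p0 # butlast L @ [v]}"
proof -
  have "L \<noteq> []"
    using assms(2) unfolding tagged_gens_def by simp
  then have last: "last (map snd L) = snd (last L)"
    by (simp add: last_map)
  define l where "l = lvl N (snd (last L))"
  have "\<forall>x\<in>set L. lvl N (snd x) = l" "\<forall>x\<in>set U. lvl N (snd x) = l + 1"
    using tagged_gens_levels[OF assms(2)] last l_def by simp_all
  moreover have "gsort S = U @ p0 # L"
    using tagged_gens_sorted_same[OF assms(1,2)] assms(3,4) last by (intro gsort_eq) simp_all
  moreover have "v = (midpoint (fst p0) (fst (last L)),
      snd (last L) + 2 * int N + 1 - vtype N (snd p0))"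
    unfolding v_def bisect_gen_def using assms(4) by simp
  ultimately show ?thesis
    using gen_children_same_level[of S U p0 L N l] \<open>L \<noteq> []\<close> assms(4)
    unfolding l_def[symmetric] by simp
qed

lemma gen_children_tagged:
  assumes "N > 0" "tagged_gens N (snd p0) (map snd L) (map snd U)" "mset S = mset (p0 # L @ U)"
  defines "v \<equiv> (midpoint (fst p0) (fst (last L)), bisect_gen N (snd p0) (snd (last L)))"
  shows "\<exists>S1 S2. gen_children N S = {S1, S2} \<and>
    mset S1 = mset (p0 # butlast L @ v # U) \<and> mset S2 = mset (L @ v # U)"
proof -
  have "L \<noteq> []"
    using assms(2) unfolding tagged_gens_def by simp
  then have "lvl N (snd p0) \<le> lvl N (snd (last L))"
    using tagged_gens_levels(3)[OF assms(2)] by (simp add: last_map)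
  then consider (lower) "lvl N (snd p0) < lvl N (snd (last L))"
    | (same) "lvl N (snd p0) = lvl N (snd (last L))"
    by linarith
  then show ?thesis
  proof cases
    case lower
    then show ?thesis
      using gen_children_tagged_lower[OF assms(1-3) lower] unfolding v_def[symmetric]
      by (intro exI[of _ "U @ butlast L @ [v, p0]"] exI[of _ "U @ L @ [v]"]) simp
  next
    case same
    then show ?thesis
      using gen_children_tagged_same[OF assms(1-3) same] unfolding v_def[symmetric]
      by (intro exI[of _ "U @ p0 # butlast L @ [v]"] exI[of _ "U @ v # L"])
        (simp add: insert_commute)
  qed
qed

definition corresponds :: "nat \<Rightarrow> ('n::finite pt \<times> int) list \<Rightarrow> 'n pt list \<times> nat \<Rightarrow> bool" where
  "corresponds N S M \<longleftrightarrow> (\<exists>p0 L U. M = (map fst (p0 # L @ U), length L) \<and>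
     length (p0 # L @ U) = CARD('n) + 1 \<and> mset S = mset (p0 # L @ U) \<and>
     tagged_gens N (snd p0) (map snd L) (map snd U))"

lemma correspondsI:
  fixes p0 :: "'n::finite pt \<times> int"
  assumes "length (p0 # L @ U) = CARD('n) + 1" "mset S = mset (p0 # L @ U)"
    "tagged_gens N (snd p0) (map snd L) (map snd U)"
  shows "corresponds N S (map fst (p0 # L @ U), length L)"
  using assms unfolding corresponds_def by blast

lemma corresponds_vertices: "corresponds N S M \<Longrightarrow> set (map fst S) = set (fst M)"
  unfolding corresponds_def by (metis fst_conv list.set_map mset_eq_setD)

lemma corresponds_keep_head_child:
  fixes p0 :: "'n::finite pt \<times> int"
  assumes "N > 0" "length (p0 # L @ U) = CARD('n) + 1"
    "tagged_gens N (snd p0) (map snd L) (map snd U)"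
    "mset S = mset (p0 # butlast L @ v # U)" "snd v = bisect_gen N (snd p0) (snd (last L))"
  shows "corresponds N S
    (map fst (p0 # butlast L @ v # U), if 2 \<le> length L then length L - 1 else CARD('n))"
proof (cases "butlast L = []")
  case True
  then obtain x where L: "L = [x]"
    using assms(3) unfolding tagged_gens_def by (cases L rule: rev_cases) auto
  have "tagged_gens N (snd p0) (map snd (v # U)) []"
    using tagged_gens_level_up[OF assms(1)] assms(3,5) tagged_gens_levels(3)[OF assms(3) refl]
    unfolding L by simp
  then show ?thesis
    using correspondsI[of p0 "v # U" "[]" S N] assms(2,4) unfolding L by simp
next
  case False
  have "L \<noteq> []" "butlast (map snd L) \<noteq> []"
    using False by (auto simp: map_butlast[symmetric])
  then have "tagged_gens N (snd p0) (map snd (butlast L)) (map snd (v # U))"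
    using tagged_gens_keep_head[OF assms(1,3)] assms(5) by (simp add: map_butlast last_map)
  moreover have "2 \<le> length L"
    using False by (cases L rule: rev_cases) (auto simp: Suc_le_eq)
  ultimately show ?thesis
    using correspondsI[of p0 "butlast L" "v # U" S N] assms(2,4) by simp
qed

lemma corresponds_drop_head_child:
  fixes p0 :: "'n::finite pt \<times> int"
  assumes "N > 0" "length (p0 # L @ U) = CARD('n) + 1"
    "tagged_gens N (snd p0) (map snd L) (map snd U)"
    "mset S = mset (L @ v # U)" "snd v = bisect_gen N (snd p0) (snd (last L))"
  shows "corresponds N S (map fst (L @ v # U), if 2 \<le> length L then length L - 1 else CARD('n))"
proof -
  obtain x L1 where L: "L = x # L1"
    using assms(3) unfolding tagged_gens_def by (cases L) auto
  show ?thesis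
  proof (cases "L1 = []")
    case True
    have "tagged_gens N (snd x) (map snd (v # U)) []"
      using tagged_gens_level_up[OF assms(1)] assms(3,5) unfolding L True by simp
    then show ?thesis
      using correspondsI[of x "v # U" "[]" S N] assms(2,4) unfolding L True by simp
  next
    case False
    then have "tagged_gens N (snd x) (map snd L1) (map snd (v # U))"
      using tagged_gens_drop_head[OF assms(1,3)] assms(5) unfolding L by (simp add: last_map)
    then show ?thesis
      using correspondsI[of x L1 "v # U" S N] assms(2,4) False unfolding L
      by (simp add: Suc_le_eq)
  qed
qed

lemma corresponds_children:
  fixes M :: "'n::finite pt list \<times> nat"
  assumes "N > 0" "corresponds N S M"
  shows "rel_set (corresponds N) (gen_children N S) (maub_children M)"
proof -
  obtain p0 L U where M: "M = (map fst (p0 # L @ U), length L)"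
    and len: "length (p0 # L @ U) = CARD('n) + 1" and S: "mset S = mset (p0 # L @ U)"
    and gens: "tagged_gens N (snd p0) (map snd L) (map snd U)"
    using assms(2) unfolding corresponds_def by blast
  have "L \<noteq> []"
    using gens unfolding tagged_gens_def by simp
  define v where "v = (midpoint (fst p0) (fst (last L)), bisect_gen N (snd p0) (snd (last L)))"
  define \<gamma>' where "\<gamma>' = (if 2 \<le> length L then length L - 1 else CARD('n))"
  obtain S1 S2 where gen: "gen_children N S = {S1, S2}"
    and S1: "mset S1 = mset (p0 # butlast L @ v # U)" and S2: "mset S2 = mset (L @ v # U)"
    using gen_children_tagged[OF assms(1) gens S] unfolding v_def by blast
  have "corresponds N S1 (map fst (p0 # butlast L @ v # U), \<gamma>')"
    unfolding \<gamma>'_def by (rule corresponds_keep_head_child[OF assms(1) len gens S1]) (simp add: v_def)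
  moreover have "corresponds N S2 (map fst (L @ v # U), \<gamma>')"
    unfolding \<gamma>'_def by (rule corresponds_drop_head_child[OF assms(1) len gens S2]) (simp add: v_def)
  moreover have "maub_children M =
      {(map fst (p0 # butlast L @ v # U), \<gamma>'), (map fst (L @ v # U), \<gamma>')}"
    using maub_children_blocks[of "map fst L" "fst p0" "map fst U"] \<open>L \<noteq> []\<close>
    unfolding M \<gamma>'_def v_def by (simp add: map_butlast last_map)
  ultimately show ?thesis
    using gen unfolding rel_set_def by auto
qed

lemma rel_set_gen_desc_maub_desc:
  assumes "N > 0" "corresponds N S M"
  shows "rel_set (corresponds N) (gen_desc N S) (maub_desc M)"
proof (rule rel_setI)
  show "\<exists>M'\<in>maub_desc M. corresponds N S' M'" if "S' \<in> gen_desc N S" for S'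
    using that
  proof induction
    case gen_root
    then show ?case
      using assms(2) maub_desc.maub_root by blast
  next
    case (gen_step S' S'')
    then obtain M' where "M' \<in> maub_desc M" "corresponds N S' M'"
      by blast
    then show ?case
      using corresponds_children[OF assms(1)] gen_step(2) maub_desc.maub_step
      unfolding rel_set_def by blast
  qed
  show "\<exists>S'\<in>gen_desc N S. corresponds N S' M'" if "M' \<in> maub_desc M" for M'
    using that
  proof induction
    case maub_root
    then show ?case
      using assms(2) gen_desc.gen_root by blast
  next
    case (maub_step M' M'')
    then obtain S' where "S' \<in> gen_desc N S" "corresponds N S' M'"
      by blast
    then show ?case
      using corresponds_children[OF assms(1)] maub_step(2) gen_desc.gen_step
      unfolding rel_set_def by blast
  qed
qed

lemma gen_desc_maub_desc_vertex_sets: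
  assumes "N > 0" "corresponds N S M"
  shows "(\<lambda>S. set (map fst S)) ` gen_desc N S = (\<lambda>M. set (fst M)) ` maub_desc M"
proof -
  have "rel_fun (corresponds N) (=) (\<lambda>S. set (map fst S)) (\<lambda>M. set (fst M))"
    by (rule rel_funI) (rule corresponds_vertices)
  from image_transfer[THEN rel_funD, THEN rel_funD, OF this rel_set_gen_desc_maub_desc[OF assms]]
  show ?thesis
    unfolding rel_set_eq .
qed

lemma tagged_gens_initial:
  assumes "N > 0" "W \<noteq> []" "sorted_wrt (\<lambda>a b. c a < c b) W" "\<forall>v\<in>set W. c v < N"
    "k = N \<or> k < c (hd W)"
  shows "tagged_gens N (- int k) (map (\<lambda>v. - int (c v)) W) []"
proof -
  have "\<forall>g\<in>set (map (\<lambda>v. - int (c v)) W). lvl N g = 0"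
    using assms(4) lvl_minus_int[OF assms(1)] by simp
  moreover have "sorted_wrt (>) (map (\<lambda>v. - int (c v)) W)"
    using assms(3) by (simp add: sorted_wrt_map)
  moreover have "lvl N (- int k) < 0 \<or> lvl N (- int k) = 0 \<and> - int (c (hd W)) < - int k"
    using assms(5)
  proof
    assume "k = N"
    then show ?thesis
      using lvl_minus_N[OF assms(1)] by simp
  next
    assume "k < c (hd W)"
    moreover have "c (hd W) < N"
      using assms(2,4) by simp
    ultimately show ?thesis
      using lvl_minus_int[OF assms(1)] by simp
  qed
  ultimately show ?thesis
    unfolding tagged_gens_def using assms(2) by (intro exI[of _ 0]) (simp add: hd_map)
qed

lemma corresponds_init:
  fixes vs :: "'n::finite pt list"
  assumes "N > 0" "length vs = CARD('n) + 1" "sorted_wrt (\<lambda>a b. c a < c b) vs"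
    "\<forall>v\<in>set vs. c v \<le> N"
  shows "corresponds N (gen_init c vs) (maub_init N c vs)"
proof -
  define lab where "lab v = (v, - int (c v))" for v
  have "vs \<noteq> []" "butlast vs \<noteq> []"
    using assms(2) by (simp_all flip: length_greater_0_conv)
  then obtain W w where vs: "vs = W @ [w]" and "W \<noteq> []"
    by (metis append_butlast_last_id)
  have W: "sorted_wrt (\<lambda>a b. c a < c b) W" "\<forall>v\<in>set W. c v < c w"
    using assms(3) unfolding vs by (auto simp: sorted_wrt_append)
  show ?thesis
  proof (cases "c w = N")
    case True
    then have "tagged_gens N (- int N) (map (snd \<circ> lab) W) []"
      using tagged_gens_initial[OF assms(1) \<open>W \<noteq> []\<close> W(1)] W(2) by (simp add: lab_def comp_def)
    then show ?thesis
      using correspondsI[of "lab w" "map lab W" "[]" "gen_init c vs" N] assms(2) True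
      unfolding vs gen_init_def maub_init_def lab_def by (simp add: comp_def)
  next
    case False
    obtain v0 V where V: "vs = v0 # V" "V \<noteq> []"
      using \<open>vs \<noteq> []\<close> \<open>butlast vs \<noteq> []\<close> by (cases vs) (auto split: if_splits)
    have "c w < N"
      using assms(4) False unfolding vs by simp
    then have "c v < N" if "v \<in> set vs" for v
      using that W(2) unfolding vs by force
    then have "\<forall>v\<in>set V. c v < N"
      using V(1) by simp
    moreover have "sorted_wrt (\<lambda>a b. c a < c b) V" "c v0 < c (hd V)"
      using assms(3) V by auto
    ultimately have "tagged_gens N (- int (c v0)) (map (snd \<circ> lab) V) []"
      using tagged_gens_initial[OF assms(1) \<open>V \<noteq> []\<close>] by (simp add: lab_def comp_def)
    moreover have "maub_init N c vs = (vs, CARD('n))"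
      unfolding maub_init_def vs using False by simp
    ultimately show ?thesis
      using correspondsI[of "lab v0" "map lab V" "[]" "gen_init c vs" N] assms(2)
      unfolding V(1) gen_init_def lab_def by (simp add: comp_def)
  qed
qed

theorem theorem4p2:
  fixes T0 :: "(real ^ 'n::finite) set set" and c :: "real ^ 'n \<Rightarrow> nat" and N :: nat
  assumes "CARD('n) \<ge> 2" and "N \<ge> CARD('n)"
    and "colored_triangulation N T0 c"
  shows "\<forall>T\<in>T0. \<forall>vs. set vs = T \<and> sorted_wrt (\<lambda>a b. c a < c b) vs \<longrightarrow>
           (\<lambda>S. set (map fst S)) ` gen_desc N (gen_init c vs)
             = (\<lambda>M. set (fst M)) ` maub_desc (maub_init N c vs)"
proof (intro ballI allI impI)
  fix T vs
  assume "T \<in> T0" and vs: "set vs = T \<and> sorted_wrt (\<lambda>a b. c a < c b) vs"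
  then have "is_simplex T" "\<forall>v\<in>T. c v \<le> N"
    using assms(3) unfolding colored_triangulation_def conforming_triangulation_def by blast+
  moreover have "distinct vs"
    using vs by (simp add: sorted_wrt_map[symmetric] strict_sorted_iff distinct_map)
  ultimately have "length vs = CARD('n) + 1"
    using vs distinct_card unfolding is_simplex_def by metis
  moreover have "N > 0"
    using assms(1,2) by linarith
  ultimately show "(\<lambda>S. set (map fst S)) ` gen_desc N (gen_init c vs)
             = (\<lambda>M. set (fst M)) ` maub_desc (maub_init N c vs)"
    using vs \<open>\<forall>v\<in>T. c v \<le> N\<close> by (intro gen_desc_maub_desc_vertex_sets corresponds_init) auto
qed

end
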